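(* Let $T$ be a tree with at least $3$ vertices and $v\in V(T)$. Then \[ f_{T,v}(v)=2+\max_{\substack{S\subseteq T\\ v\in V(S)}}\Bigg(\min_{P\in\mathcal{P}_S(v)}\sum_{w\in V(P)}\big(\deg_S(w)-2\big)\Bigg), \] where $S$ ranges over the subtrees (connected subgraphs) of $T$ containing $v$.
   Context: For a tree $T$ rooted at $v$, the values $f_{T,v}(w)$, $w\in V(T)$, are defined recursively: if $w$ has no children (no descendants) in the rooted tree, $f_{T,v}(w)=0$; otherwise let $u_0,\dots,u_k$ be the children of $w$, let $T_i$ be the subtree consisting of $u_i$ and all its descendants, rooted at $u_i$, and order them so that $c_i:=f_{T_i,u_i}(u_i)$ satisfy $c_0\ge c_1\ge\cdots\ge c_k$; then $f_{T,v}(w)=\max_{0\le i\le k}(i+c_i)$. (Note $f_{T,v}(w)=f_{T_w,w}(w)$ where $T_w$ is the subtree of descendants of $w$.) For a subtree $S$ and $w\in V(S)$, $\deg_S(w)$ is the degree of $w$ in $S$. $\mathcal{P}_S(v)$ is the set of maximal paths in $S$ having $v$ as an endpoint (if $S$ is the single vertex $v$, this is the one-vertex path). *)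

theory Defs
  imports Main "HOL-Library.Multiset"
begin

definition graph :: "'a set \<Rightarrow> 'a set set \<Rightarrow> bool" where
  "graph V E \<longleftrightarrow> finite V \<and> (\<forall>e\<in>E. \<exists>x y. x \<noteq> y \<and> e = {x, y} \<and> x \<in> V \<and> y \<in> V)"

definition adj :: "'a set set \<Rightarrow> 'a \<Rightarrow> 'a \<Rightarrow> bool" where
  "adj E x y \<longleftrightarrow> x \<noteq> y \<and> {x, y} \<in> E"

definition is_path :: "'a set set \<Rightarrow> 'a list \<Rightarrow> bool" where
  "is_path E p \<longleftrightarrow> p \<noteq> [] \<and> distinct p \<and> (\<forall>i. Suc i < length p \<longrightarrow> adj E (p ! i) (p ! Suc i))"

definition path_edges :: "'a list \<Rightarrow> 'a set set" where
  "path_edges p = {{p ! i, p ! Suc i} | i. Suc i < length p}"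

definition connected_graph :: "'a set \<Rightarrow> 'a set set \<Rightarrow> bool" where
  "connected_graph V E \<longleftrightarrow> V \<noteq> {} \<and>
     (\<forall>x\<in>V. \<forall>y\<in>V. \<exists>p. is_path E p \<and> set p \<subseteq> V \<and> hd p = x \<and> last p = y)"

definition is_cycle :: "'a set set \<Rightarrow> 'a list \<Rightarrow> bool" where
  "is_cycle E c \<longleftrightarrow> length c \<ge> 3 \<and> is_path E c \<and> adj E (last c) (hd c)"

definition is_tree :: "'a set \<Rightarrow> 'a set set \<Rightarrow> bool" where
  "is_tree V E \<longleftrightarrow> graph V E \<and> connected_graph V E \<and> \<not> (\<exists>c. set c \<subseteq> V \<and> is_cycle E c)"

definition subgraph :: "'a set \<Rightarrow> 'a set set \<Rightarrow> 'a set \<Rightarrow> 'a set set \<Rightarrow> bool" where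
  "subgraph VS ES V E \<longleftrightarrow> VS \<subseteq> V \<and> ES \<subseteq> E \<and> graph VS ES"

definition deg :: "'a set set \<Rightarrow> 'a \<Rightarrow> nat" where
  "deg ES w = card {e \<in> ES. w \<in> e}"

definition path_from :: "'a set \<Rightarrow> 'a set set \<Rightarrow> 'a \<Rightarrow> 'a list \<Rightarrow> bool" where
  "path_from VS ES v p \<longleftrightarrow> is_path ES p \<and> set p \<subseteq> VS \<and> hd p = v"

definition max_paths :: "'a set \<Rightarrow> 'a set set \<Rightarrow> 'a \<Rightarrow> 'a list set" where
  "max_paths VS ES v = {p. path_from VS ES v p \<and>
     \<not> (\<exists>q. path_from VS ES v q \<and> set p \<subseteq> set q \<and> path_edges p \<subseteq> path_edges q \<and> set p \<noteq> set q)}"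

definition children :: "'a set \<Rightarrow> 'a set set \<Rightarrow> 'a \<Rightarrow> 'a \<Rightarrow> 'a set" where
  "children V E v w = {u \<in> V. adj E w u \<and>
     (\<exists>p. is_path E p \<and> set p \<subseteq> V \<and> hd p = v \<and> last p = u \<and> w \<in> set p)}"

definition f_step :: "('a \<Rightarrow> nat) \<Rightarrow> 'a set \<Rightarrow> nat" where
  "f_step g C = (if C = {} then 0 else
     (let cs = rev (sorted_list_of_multiset (image_mset g (mset_set C)))
      in Max {i + cs ! i | i. i < length cs}))"

definition f_tree :: "'a set \<Rightarrow> 'a set set \<Rightarrow> 'a \<Rightarrow> 'a \<Rightarrow> nat" where
  "f_tree V E v = (THE g. (\<forall>w\<in>V. g w = f_step g (children V E v w)) \<and> (\<forall>w. w \<notin> V \<longrightarrow> g w = 0))"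

end

theory Submission
  imports Defs
begin

text \<open>Root the tree at v. A subtree of T_w containing w is determined by its vertex set S,
  which is closed under taking parents; the maximal paths of S from w are the branches from w
  to the leaves of S, and deg_S(x) - 2 is the number of children of x in S, minus one unless
  x = w. Writing m(w, S) for the least sum of deg_S - 2 along these branches and C for the set
  of children of w in S, this gives m(w, S) = |C| - 1 + min {m(u, S \<inter> T_u) | u \<in> C}. Hence the
  maximum M(w) of m(w, S) over all S is -2 at a leaf and otherwise the maximum of
  |C| - 1 + min {M(u) | u \<in> C} over nonempty sets C of children of w. The recursion for f has
  the same shape: the i-th largest of the values c_j is at least t iff at least i + 1 of them
  are, so max (i + c_i) is the maximum of |C| - 1 + min {c_u | u \<in> C} over nonempty C. Thus
  2 + M solves the recursion defining f, whose solution is unique. Finally, since paths in a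
  tree are unique, the connected subgraphs containing v are exactly the parent-closed vertex
  sets with their induced edges.\<close>

definition walk :: "'a set set \<Rightarrow> 'a list \<Rightarrow> bool" where
  "walk E p \<longleftrightarrow> p \<noteq> [] \<and> successively (adj E) p"

lemma is_path_iff_walk_distinct: "is_path E p \<longleftrightarrow> walk E p \<and> distinct p"
  unfolding is_path_def walk_def successively_conv_nth by blast

lemma adj_sym: "adj E x y \<Longrightarrow> adj E y x"
  unfolding adj_def by (auto simp: insert_commute)

lemma adj_mono: "ES \<subseteq> E \<Longrightarrow> adj ES x y \<Longrightarrow> adj E x y"
  unfolding adj_def by blast

lemma walk_rev: "walk E p \<Longrightarrow> walk E (rev p)"
  unfolding walk_def by (auto elim: successively_mono intro: adj_sym)

lemma walk_append: "walk E p \<Longrightarrow> walk E q \<Longrightarrow> last p = hd q \<Longrightarrow> walk E (p @ tl q)"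
  unfolding walk_def by (cases q) (auto simp: successively_append_iff successively_Cons)

lemma walk_snoc: "walk E p \<Longrightarrow> adj E (last p) x \<Longrightarrow> walk E (p @ [x])"
  unfolding walk_def by (auto simp: successively_append_iff)

lemma last_append_tl: "p \<noteq> [] \<Longrightarrow> q \<noteq> [] \<Longrightarrow> last p = hd q \<Longrightarrow> last (p @ tl q) = last q"
  by (cases q) (auto simp: last_ConsR)

lemma is_path_snoc:
  "is_path E p \<Longrightarrow> adj E (last p) x \<Longrightarrow> x \<notin> set p \<Longrightarrow> is_path E (p @ [x])"
  by (simp add: is_path_iff_walk_distinct walk_snoc)

lemma is_path_prefix: "is_path E (a @ b) \<Longrightarrow> a \<noteq> [] \<Longrightarrow> is_path E a"
  by (auto simp: is_path_iff_walk_distinct walk_def successively_append_iff)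

lemma is_path_suffix: "is_path E (a @ b) \<Longrightarrow> b \<noteq> [] \<Longrightarrow> is_path E b"
  by (auto simp: is_path_iff_walk_distinct walk_def successively_append_iff)

lemma is_path_mono: "ES \<subseteq> E \<Longrightarrow> is_path ES p \<Longrightarrow> is_path E p"
  unfolding is_path_def by (auto intro: adj_mono)

lemma walk_imp_path:
  assumes "walk E p"
  shows "\<exists>r. is_path E r \<and> set r \<subseteq> set p \<and> hd r = hd p \<and> last r = last p"
  using assms
proof (induction "length p" arbitrary: p rule: less_induct)
  case less
  show ?case
  proof (cases "distinct p")
    case True
    then show ?thesis using less.prems by (auto simp: is_path_iff_walk_distinct)
  next
    case False
    then obtain xs ys zs y where p: "p = xs @ [y] @ ys @ [y] @ zs"
      using not_distinct_decomp by blast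
    define p' where "p' = xs @ [y] @ zs"
    have "walk E p'" using less.prems unfolding p p'_def walk_def
      by (cases zs) (auto simp: successively_append_iff successively_Cons)
    moreover have "length p' < length p" unfolding p p'_def by simp
    ultimately obtain r where "is_path E r" "set r \<subseteq> set p'" "hd r = hd p'" "last r = last p'"
      using less.hyps by blast
    moreover have "set p' \<subseteq> set p" "hd p' = hd p" "last p' = last p"
      unfolding p p'_def by (auto simp: hd_append)
    ultimately show ?thesis by (metis order_trans)
  qed
qed

lemma walk_closes_cycle:
  assumes w: "walk E p" and x: "x \<notin> set p" "adj E x (hd p)" "adj E x (last p)"
    and ends: "hd p \<noteq> last p"
  shows "\<exists>r. is_cycle E (x # r) \<and> set r \<subseteq> set p"
proof -
  obtain r where r: "is_path E r" "set r \<subseteq> set p" "hd r = hd p" "last r = last p"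
    using walk_imp_path[OF w] by blast
  have "r \<noteq> []" using r(1) by (simp add: is_path_def)
  then have "2 \<le> length r" using r(3,4) ends by (cases r) (auto simp: Suc_le_eq)
  moreover have "is_path E (x # r)"
    using r x \<open>r \<noteq> []\<close> by (cases r) (auto simp: is_path_iff_walk_distinct walk_def)
  ultimately have "is_cycle E (x # r)"
    using r(4) x(3) \<open>r \<noteq> []\<close> by (simp add: is_cycle_def adj_sym)
  then show ?thesis using r(2) by blast
qed

lemma graph_edgeE:
  assumes "graph V E" "e \<in> E"
  obtains a b where "a \<noteq> b" "e = {a, b}" "a \<in> V" "b \<in> V"
  using assms unfolding graph_def by meson

lemma graph_edge_subset: "graph V E \<Longrightarrow> e \<in> E \<Longrightarrow> e \<subseteq> V"
  by (metis graph_edgeE empty_subsetI insert_subset)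

lemma graph_adj_in_vertices: "graph V E \<Longrightarrow> adj E x y \<Longrightarrow> x \<in> V \<and> y \<in> V"
  unfolding adj_def using graph_edge_subset by (metis insert_subset)

lemma walk_in_vertices: "graph V E \<Longrightarrow> walk E p \<Longrightarrow> hd p \<in> V \<Longrightarrow> set p \<subseteq> V"
proof (induction p)
  case (Cons a p)
  then show ?case by (cases p) (auto simp: walk_def dest: graph_adj_in_vertices)
qed simp

lemma path_edges_snoc: "path_edges p \<subseteq> path_edges (p @ [x])"
  unfolding path_edges_def by (force simp: nth_append)

lemma kth_largest_ge_iff:
  fixes xs :: "'a::linorder list"
  assumes sorted: "sorted xs" and k: "k < length xs"
  shows "t \<le> rev xs ! k \<longleftrightarrow> Suc k \<le> length (filter (\<lambda>y. t \<le> y) xs)"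
proof -
  let ?cs = "rev xs" and ?P = "\<lambda>y. t \<le> y"
  have antimono: "?cs ! j \<le> ?cs ! i" if "i \<le> j" "j < length xs" for i j
    using that sorted by (simp add: rev_nth sorted_nth_mono)
  have count:
    "length (filter ?P xs) = length (filter ?P (take n ?cs)) + length (filter ?P (drop n ?cs))"
    for n
    by (metis append_take_drop_id filter_append length_append length_rev rev_filter)
  show ?thesis
  proof
    assume "t \<le> ?cs ! k"
    then have "\<forall>y\<in>set (take (Suc k) ?cs). ?P y"
      using k antimono[of _ k] by (auto simp: in_set_conv_nth less_Suc_eq_le) (meson order.trans)
    then have "length (filter ?P (take (Suc k) ?cs)) = Suc k" using k by simp
    then show "Suc k \<le> length (filter ?P xs)" using count[of "Suc k"] by linarith
  next
    assume "Suc k \<le> length (filter ?P xs)"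
    show "t \<le> ?cs ! k"
    proof (rule ccontr)
      assume "\<not> t \<le> ?cs ! k"
      have "\<not> ?P y" if y: "y \<in> set (drop k ?cs)" for y
      proof -
        obtain j where "j < length (drop k ?cs)" "y = drop k ?cs ! j"
          using y by (auto simp: in_set_conv_nth)
        then have "y = ?cs ! (k + j)" "k + j < length xs" by auto
        then show ?thesis using antimono[of k "k + j"] \<open>\<not> t \<le> ?cs ! k\<close> by simp
      qed
      then have "length (filter ?P xs) \<le> k"
        using count[of k] length_filter_le[of ?P "take k ?cs"] by (simp add: filter_empty_conv)
      then show False using \<open>Suc k \<le> _\<close> by simp
    qed
  qed
qed

lemma length_filter_sorted_image_mset:
  assumes "finite C"
  shows "length (filter P (sorted_list_of_multiset (image_mset g (mset_set C))))
    = card {x\<in>C. P (g x)}"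
proof -
  have "length (filter P (sorted_list_of_multiset (image_mset g (mset_set C))))
      = size (filter_mset P (image_mset g (mset_set C)))"
    by (metis mset_filter mset_sorted_list_of_multiset size_mset)
  also have "\<dots> = card {x\<in>C. P (g x)}" using assms by (simp add: filter_mset_image_mset)
  finally show ?thesis .
qed

lemma f_step_eq_Max_subsets:
  assumes fin: "finite C" and ne: "C \<noteq> {}"
  shows "f_step g C = Max {card S - 1 + Min (g ` S) | S. S \<subseteq> C \<and> S \<noteq> {}}"
proof -
  define xs where "xs = sorted_list_of_multiset (image_mset g (mset_set C))"
  have count: "length (filter P xs) = card {x\<in>C. P (g x)}" for P
    unfolding xs_def using length_filter_sorted_image_mset[OF fin] .
  have len: "length xs = card C" using count[of "\<lambda>_. True"] by simp
  have kth: "t \<le> rev xs ! k \<longleftrightarrow> Suc k \<le> card {x\<in>C. t \<le> g x}" if "k < card C" for t k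
    using kth_largest_ge_iff[of xs k t] that len count unfolding xs_def by simp
  have "f_step g C = Max {i + rev xs ! i | i. i < card C}"
    using ne len unfolding f_step_def xs_def by (simp add: Let_def)
  also have "\<dots> = Max {card S - 1 + Min (g ` S) | S. S \<subseteq> C \<and> S \<noteq> {}}"
  proof (rule Max_eq_if)
    have "{card S - 1 + Min (g ` S) | S. S \<subseteq> C \<and> S \<noteq> {}}
        = (\<lambda>S. card S - 1 + Min (g ` S)) ` {S. S \<subseteq> C \<and> S \<noteq> {}}" by blast
    then show "finite {card S - 1 + Min (g ` S) | S. S \<subseteq> C \<and> S \<noteq> {}}"
      using fin by simp
  next
    show "\<forall>a\<in>{i + rev xs ! i | i. i < card C}.
        \<exists>b\<in>{card S - 1 + Min (g ` S) | S. S \<subseteq> C \<and> S \<noteq> {}}. a \<le> b"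
    proof (intro ballI, elim CollectE exE conjE)
      fix a i assume a: "a = i + rev xs ! i" and i: "i < card C"
      define S where "S = {x\<in>C. rev xs ! i \<le> g x}"
      have "Suc i \<le> card S" using kth[OF i, of "rev xs ! i"] unfolding S_def by blast
      then have "S \<noteq> {}" by auto
      moreover have "finite S" unfolding S_def using fin by simp
      ultimately have "rev xs ! i \<le> Min (g ` S)" unfolding S_def by simp
      then have "a \<le> card S - 1 + Min (g ` S)" using a \<open>Suc i \<le> card S\<close> by simp
      moreover have "S \<subseteq> C" unfolding S_def by blast
      ultimately show "\<exists>b\<in>{card S - 1 + Min (g ` S) | S. S \<subseteq> C \<and> S \<noteq> {}}. a \<le> b"
        using \<open>S \<noteq> {}\<close> by blast
    qed
  next
    show "\<forall>b\<in>{card S - 1 + Min (g ` S) | S. S \<subseteq> C \<and> S \<noteq> {}}.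
        \<exists>a\<in>{i + rev xs ! i | i. i < card C}. b \<le> a"
    proof (intro ballI, elim CollectE exE conjE)
      fix b S assume b: "b = card S - 1 + Min (g ` S)" and S: "S \<subseteq> C" "S \<noteq> {}"
      define k where "k = card S - 1"
      have finS: "finite S" using S fin finite_subset by blast
      then have card_S: "card S = Suc k" unfolding k_def using S(2) by (simp add: card_gt_0_iff)
      then have k: "k < card C" using card_mono[OF fin S(1)] by simp
      have "S \<subseteq> {x\<in>C. Min (g ` S) \<le> g x}" using S finS by auto
      then have "card S \<le> card {x\<in>C. Min (g ` S) \<le> g x}" using fin by (intro card_mono) auto
      then have "Suc k \<le> card {x\<in>C. Min (g ` S) \<le> g x}" using card_S by simp
      then have "b \<le> k + rev xs ! k" using kth[OF k] b unfolding k_def by simp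
      then show "\<exists>a\<in>{i + rev xs ! i | i. i < card C}. b \<le> a" using k by blast
    qed
  qed simp
  finally show ?thesis .
qed

lemma Min_image_UN:
  assumes C: "finite C" "C \<noteq> {}" and L: "\<And>u. u \<in> C \<Longrightarrow> finite (L u) \<and> L u \<noteq> {}"
  shows "Min (f ` (\<Union>u\<in>C. L u)) = Min ((\<lambda>u. Min (f ` L u)) ` C)"
proof (rule antisym)
  have fin: "finite (f ` (\<Union>u\<in>C. L u))" and ne: "f ` (\<Union>u\<in>C. L u) \<noteq> {}"
    using C L by auto
  have "Min (f ` (\<Union>u\<in>C. L u)) \<le> Min (f ` L u)" if "u \<in> C" for u
    using that L fin by (intro Min_antimono) auto
  then show "Min (f ` (\<Union>u\<in>C. L u)) \<le> Min ((\<lambda>u. Min (f ` L u)) ` C)"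
    using C by (intro Min.boundedI) auto
  obtain u a where "u \<in> C" "a \<in> L u" "Min (f ` (\<Union>u\<in>C. L u)) = f a"
    using Min_in[OF fin ne] by blast
  moreover have "Min ((\<lambda>u. Min (f ` L u)) ` C) \<le> Min (f ` L u)" using C \<open>u \<in> C\<close> by simp
  moreover have "Min (f ` L u) \<le> f a" using L \<open>u \<in> C\<close> \<open>a \<in> L u\<close> by simp
  ultimately show "Min ((\<lambda>u. Min (f ` L u)) ` C) \<le> Min (f ` (\<Union>u\<in>C. L u))" by simp
qed

lemma Min_image_mono:
  fixes f g :: "'a \<Rightarrow> 'b::linorder"
  assumes "finite C" "C \<noteq> {}" "\<And>u. u \<in> C \<Longrightarrow> f u \<le> g u"
  shows "Min (f ` C) \<le> Min (g ` C)"
proof -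
  obtain u where "u \<in> C" "Min (g ` C) = g u" using obtains_MIN[OF assms(1,2)] by metis
  then show ?thesis using assms by (metis Min_le finite_imageI image_eqI order.trans)
qed

lemma f_step_cong:
  assumes "\<And>x. x \<in> C \<Longrightarrow> g x = h x"
  shows "f_step g C = f_step h C"
proof -
  have "image_mset g (mset_set C) = image_mset h (mset_set C)"
    using assms by (cases "finite C") (auto intro: image_mset_cong)
  then show ?thesis by (simp add: f_step_def)
qed

definition induced :: "'a set set \<Rightarrow> 'a set \<Rightarrow> 'a set set" where
  "induced E S = {e \<in> E. e \<subseteq> S}"

lemma induced_subset: "induced E S \<subseteq> E"
  unfolding induced_def by blast

lemma is_path_induced: "is_path E p \<Longrightarrow> set p \<subseteq> S \<Longrightarrow> is_path (induced E S) p"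
  unfolding is_path_def induced_def adj_def by (auto simp: Suc_lessD)

lemma deg_induced_eq_card_adj:
  assumes "graph V E" "x \<in> S"
  shows "deg (induced E S) x = card {y \<in> S. adj E x y}"
proof -
  have "{e \<in> induced E S. x \<in> e} = (\<lambda>y. {x, y}) ` {y \<in> S. adj E x y}"
  proof (rule set_eqI, rule iffI)
    fix e assume "e \<in> {e \<in> induced E S. x \<in> e}"
    then have e: "e \<in> E" "e \<subseteq> S" "x \<in> e" unfolding induced_def by auto
    obtain a b where "a \<noteq> b" "e = {a, b}" using graph_edgeE[OF assms(1) e(1)] by metis
    then obtain y where "e = {x, y}" "x \<noteq> y" using e(3) by auto
    then show "e \<in> (\<lambda>y. {x, y}) ` {y \<in> S. adj E x y}" using e unfolding adj_def by auto
  next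
    fix e assume "e \<in> (\<lambda>y. {x, y}) ` {y \<in> S. adj E x y}"
    then show "e \<in> {e \<in> induced E S. x \<in> e}"
      using assms(2) unfolding induced_def adj_def by auto
  qed
  moreover have "inj_on (\<lambda>y. {x, y}) {y \<in> S. adj E x y}"
    unfolding inj_on_def adj_def by (auto simp: doubleton_eq_iff)
  ultimately show ?thesis unfolding deg_def by (simp add: card_image)
qed

locale rooted_tree =
  fixes V :: "'a set" and E :: "'a set set" and v :: 'a
  assumes tree: "is_tree V E" and root: "v \<in> V"
begin

lemma graph: "graph V E"
  using tree by (simp add: is_tree_def)

lemma finite_V: "finite V"
  using graph by (simp add: graph_def)

lemma no_cycle: "\<not> is_cycle E c"
proof
  assume c: "is_cycle E c"
  then have "hd c \<in> V" using graph_adj_in_vertices[OF graph] by (auto simp: is_cycle_def)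
  then have "set c \<subseteq> V"
    using c walk_in_vertices[OF graph] by (auto simp: is_cycle_def is_path_iff_walk_distinct)
  then show False using c tree by (auto simp: is_tree_def)
qed

lemma tree_path_unique:
  "is_path E p \<Longrightarrow> is_path E q \<Longrightarrow> hd p = hd q \<Longrightarrow> last p = last q \<Longrightarrow> p = q"
proof (induction p arbitrary: q)
  case Nil
  then show ?case by (simp add: is_path_def)
next
  case (Cons x p)
  obtain q' where q: "q = x # q'"
    using Cons.prems by (cases q) (auto simp: is_path_def)
  have last_not_x: "last r \<noteq> x" if "r \<noteq> []" "distinct (x # r)" for r
    using that last_in_set by fastforce
  consider "p = []" "q' = []" | "p \<noteq> []" "q' \<noteq> []"
    using Cons.prems q last_not_x by (cases "p = []"; cases "q' = []") (auto simp: is_path_def)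
  then show ?case
  proof cases
    case 2
    then have paths: "is_path E p" "is_path E q'"
      using Cons.prems q by (auto simp: is_path_iff_walk_distinct walk_def successively_Cons)
    have same_last: "last p = last q'" using Cons.prems 2 q by simp
    show ?thesis
    proof (cases "hd p = hd q'")
      case True
      then show ?thesis using Cons.IH[OF paths True same_last] q by simp
    next
      case False
      \<comment> \<open>p followed by q' backwards avoids x and joins two neighbours of x: a cycle\<close>
      define w where "w = p @ tl (rev q')"
      have "walk E w" unfolding w_def using paths same_last 2
        by (intro walk_append) (auto simp: is_path_iff_walk_distinct walk_rev last_rev hd_rev)
      moreover have "hd w = hd p" using 2 unfolding w_def by simp
      moreover have "last w = hd q'"
        unfolding w_def using 2 same_last by (simp add: last_append_tl last_rev hd_rev)
      moreover have "set w \<subseteq> set p \<union> set q'"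
        using list.set_sel(2)[of "rev q'"] 2 unfolding w_def by auto
      then have "x \<notin> set w" using Cons.prems(1,2) q by (auto simp: is_path_def)
      moreover have "adj E x (hd p)" "adj E x (hd q')"
        using Cons.prems(1,2) q 2 by (auto simp: is_path_def nth_Cons' hd_conv_nth)
      ultimately show ?thesis using walk_closes_cycle[of E w x] False no_cycle by auto
    qed
  qed (use q in simp)
qed

definition root_path :: "'a \<Rightarrow> 'a list" where
  "root_path x = (THE p. is_path E p \<and> hd p = v \<and> last p = x)"

lemma root_path_eqI: "is_path E p \<Longrightarrow> hd p = v \<Longrightarrow> last p = x \<Longrightarrow> root_path x = p"
  unfolding root_path_def by (rule the_equality) (auto intro: tree_path_unique)

lemma root_path_spec:
  assumes "x \<in> V"
  shows "is_path E (root_path x) \<and> hd (root_path x) = v \<and> last (root_path x) = x"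
proof -
  obtain p where "is_path E p" "hd p = v" "last p = x"
    using tree root assms unfolding is_tree_def connected_graph_def by blast
  moreover from this have "root_path x = p" by (rule root_path_eqI)
  ultimately show ?thesis by simp
qed

lemma root_path_nonempty: "x \<in> V \<Longrightarrow> root_path x \<noteq> []"
  using root_path_spec by (auto simp: is_path_def)

lemma in_root_path: "x \<in> V \<Longrightarrow> x \<in> set (root_path x)"
  using root_path_spec[of x] root_path_nonempty[of x] last_in_set by metis

lemma root_path_in_V: "x \<in> V \<Longrightarrow> set (root_path x) \<subseteq> V"
  using walk_in_vertices[OF graph, of "root_path x"] root_path_spec[of x] root
  by (auto simp: is_path_iff_walk_distinct)

lemma root_path_root: "root_path v = [v]"
  by (rule root_path_eqI) (auto simp: is_path_def)

lemma root_path_inj: "x \<in> V \<Longrightarrow> y \<in> V \<Longrightarrow> root_path x = root_path y \<Longrightarrow> x = y"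
  using root_path_spec by metis

lemma root_path_prefix:
  "x \<in> V \<Longrightarrow> root_path x = a @ b \<Longrightarrow> a \<noteq> [] \<Longrightarrow> root_path (last a) = a"
  using root_path_spec[of x] is_path_prefix[of E a b] by (intro root_path_eqI) auto

lemma root_path_split:
  assumes x: "x \<in> V" and y: "y \<in> set (root_path x)"
  shows "\<exists>b. root_path x = root_path y @ b"
proof -
  obtain a b where "root_path x = a @ y # b" using y by (meson split_list)
  moreover from this have "root_path y = a @ [y]"
    using root_path_prefix[OF x, of "a @ [y]" b] by simp
  ultimately show ?thesis by auto
qed

lemma root_path_snoc:
  assumes x: "x \<in> V" and "adj E x y" "y \<notin> set (root_path x)"
  shows "root_path y = root_path x @ [y]"
  using assms root_path_spec[OF x] root_path_nonempty[OF x]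
  by (intro root_path_eqI) (auto intro: is_path_snoc)

definition parent :: "'a \<Rightarrow> 'a" where
  "parent x = last (butlast (root_path x))"

lemma root_path_parent:
  assumes "x \<in> V" "x \<noteq> v"
  shows "root_path x = root_path (parent x) @ [x]" "parent x \<in> V" "adj E (parent x) x"
proof -
  have p: "root_path x = butlast (root_path x) @ [x]"
    using root_path_spec[OF assms(1)] root_path_nonempty[OF assms(1)]
    by (metis append_butlast_last_id)
  have ne: "butlast (root_path x) \<noteq> []"
    using p root_path_spec[OF assms(1)] assms(2) by (metis append_Nil list.sel(1))
  then have pp: "root_path (parent x) = butlast (root_path x)"
    unfolding parent_def using root_path_prefix[OF assms(1) p] by simp
  then show "root_path x = root_path (parent x) @ [x]" using p by simp
  show "parent x \<in> V"
    using root_path_in_V[OF assms(1)] ne unfolding parent_def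
    by (metis in_set_butlastD last_in_set subsetD)
  have "is_path E (butlast (root_path x) @ [x])" using root_path_spec[OF assms(1)] p by simp
  then show "adj E (parent x) x" using ne
    by (auto simp: is_path_iff_walk_distinct walk_def successively_append_iff parent_def)
qed

lemma parent_in_root_path: "x \<in> V \<Longrightarrow> x \<noteq> v \<Longrightarrow> parent x \<in> set (root_path x)"
  using root_path_parent(1,2) in_root_path[of "parent x"] by simp

definition child :: "'a \<Rightarrow> 'a set" where
  "child w = {u \<in> V. u \<noteq> v \<and> parent u = w}"

lemma child_iff_root_path:
  "u \<in> child w \<longleftrightarrow> u \<in> V \<and> w \<in> V \<and> root_path u = root_path w @ [u]"
proof
  assume "u \<in> child w"
  then show "u \<in> V \<and> w \<in> V \<and> root_path u = root_path w @ [u]"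
    unfolding child_def using root_path_parent by auto
next
  assume u: "u \<in> V \<and> w \<in> V \<and> root_path u = root_path w @ [u]"
  then have "u \<noteq> v" using root_path_root root_path_nonempty by fastforce
  moreover have "parent u = w" using u root_path_spec unfolding parent_def by simp
  ultimately show "u \<in> child w" using u unfolding child_def by blast
qed

lemma child_root_path: "u \<in> child w \<Longrightarrow> root_path u = root_path w @ [u]"
  by (simp add: child_iff_root_path)

lemma child_in_V: "u \<in> child w \<Longrightarrow> u \<in> V \<and> w \<in> V"
  by (simp add: child_iff_root_path)

lemma child_neq: "u \<in> child w \<Longrightarrow> u \<noteq> w"
  using child_root_path[of u w] by auto

lemma finite_child: "finite (child w)"
  using finite_V unfolding child_def by simp

lemma adj_in_root_path:
  assumes u: "u \<in> V" and a: "adj E w u" and w: "w \<in> set (root_path u)"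
  shows "u \<in> child w"
proof -
  have "u \<noteq> v" using a w root_path_root by (auto simp: adj_def)
  then have pu: "root_path u = root_path (parent u) @ [u]" and pV: "parent u \<in> V"
    using root_path_parent[OF u] by auto
  have "w \<in> set (root_path (parent u))" using w pu a by (auto simp: adj_def)
  then obtain b where b: "root_path (parent u) = root_path w @ b"
    using root_path_split[OF pV] by blast
  have wV: "w \<in> V" using graph_adj_in_vertices[OF graph a] by simp
  have "u \<notin> set (root_path (parent u))"
    using root_path_spec[OF u] pu by (auto simp: is_path_def)
  then have "root_path u = root_path w @ [u]"
    using root_path_snoc[OF wV a] b by simp
  then show ?thesis using u wV by (simp add: child_iff_root_path)
qed

lemma children_eq_child: "children V E v w = child w"
proof (rule set_eqI, rule iffI)
  fix u assume "u \<in> children V E v w"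
  then obtain p where u: "u \<in> V" "adj E w u" "is_path E p" "hd p = v" "last p = u" "w \<in> set p"
    unfolding children_def by blast
  then show "u \<in> child w" using adj_in_root_path root_path_eqI by metis
next
  fix u assume u: "u \<in> child w"
  then have "u \<in> V" "u \<noteq> v" "parent u = w" unfolding child_def by auto
  then show "u \<in> children V E v w" unfolding children_def
    using root_path_spec root_path_in_V parent_in_root_path root_path_parent(3) by blast
qed

lemma adj_parent_or_child:
  assumes x: "x \<in> V" and a: "adj E x y"
  shows "(x \<noteq> v \<and> y = parent x) \<or> y \<in> child x"
proof (cases "x \<in> set (root_path y)")
  case True
  then show ?thesis using adj_in_root_path a graph_adj_in_vertices[OF graph] by blast
next
  case False
  have "y \<in> V" using graph_adj_in_vertices[OF graph a] by simp
  then have "x \<in> child y"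
    using root_path_snoc[of y x] False x a by (simp add: child_iff_root_path adj_sym)
  then show ?thesis unfolding child_def by auto
qed

definition desc :: "'a \<Rightarrow> 'a set" where
  "desc w = {x \<in> V. w \<in> set (root_path x)}"

lemma desc_subset_V: "desc w \<subseteq> V"
  unfolding desc_def by auto

lemma desc_refl: "w \<in> V \<Longrightarrow> w \<in> desc w"
  unfolding desc_def using in_root_path by blast

lemma desc_root: "desc v = V"
proof -
  have "v \<in> set (root_path x)" if "x \<in> V" for x
    using root_path_spec[OF that] hd_in_set[OF root_path_nonempty[OF that]] by simp
  then show ?thesis unfolding desc_def by auto
qed

lemma desc_root_path: "x \<in> desc w \<Longrightarrow> \<exists>b. root_path x = root_path w @ b"
  unfolding desc_def using root_path_split by blast

lemma desc_in_V: "x \<in> desc w \<Longrightarrow> w \<in> V"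
  unfolding desc_def using root_path_in_V by blast

lemma desc_trans: "x \<in> desc u \<Longrightarrow> u \<in> desc w \<Longrightarrow> x \<in> desc w"
  using desc_root_path[of x u] unfolding desc_def by auto

lemma child_in_desc: "u \<in> child w \<Longrightarrow> u \<in> desc w"
  unfolding desc_def by (simp add: child_iff_root_path in_root_path)

lemma desc_neq_root: "x \<in> desc w \<Longrightarrow> x \<noteq> w \<Longrightarrow> x \<noteq> v"
  unfolding desc_def using root_path_root by auto

lemma ancestor_not_in_desc:
  assumes w: "w \<in> V" and y: "y \<in> set (root_path w)" "y \<noteq> w"
  shows "y \<notin> desc w"
proof
  assume "y \<in> desc w"
  then obtain c where c: "root_path y = root_path w @ c" using desc_root_path by blast
  obtain b where "root_path w = root_path y @ b" using root_path_split w y by blast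
  with c have "root_path y = root_path w" by simp
  then show False using root_path_inj w root_path_in_V y by blast
qed

lemma parent_not_in_desc: "w \<in> V \<Longrightarrow> w \<noteq> v \<Longrightarrow> parent w \<notin> desc w"
  using ancestor_not_in_desc[OF _ parent_in_root_path] root_path_parent(1)[of w] by force

lemma desc_child_subset: "u \<in> child w \<Longrightarrow> desc u \<subseteq> desc w - {w}"
proof
  fix x assume u: "u \<in> child w" and x: "x \<in> desc u"
  obtain b where "root_path x = root_path u @ b" using desc_root_path[OF x] by blast
  then have b: "root_path x = root_path w @ u # b" using child_root_path[OF u] by simp
  then have "x \<noteq> w" by (metis append.right_neutral list.distinct(1) same_append_eq)
  moreover have "w \<in> set (root_path x)" using b in_root_path child_in_V[OF u] by auto
  ultimately show "x \<in> desc w - {w}" using x desc_subset_V unfolding desc_def by auto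
qed

lemma desc_in_child_desc:
  assumes x: "x \<in> desc w" and xw: "x \<noteq> w"
  shows "\<exists>u\<in>child w. x \<in> desc u"
proof -
  obtain b where b: "root_path x = root_path w @ b" using desc_root_path[OF x] by blast
  have xV: "x \<in> V" and wV: "w \<in> V" using x desc_subset_V desc_in_V by auto
  have "b \<noteq> []" using b xw root_path_inj xV wV by auto
  then obtain u b' where ub: "b = u # b'" by (cases b) auto
  then have "root_path u = root_path w @ [u]"
    using root_path_prefix[OF xV, of "root_path w @ [u]" b'] b by simp
  moreover have "u \<in> V" using root_path_in_V[OF xV] b ub by auto
  ultimately have "u \<in> child w" using wV by (simp add: child_iff_root_path)
  moreover have "x \<in> desc u" unfolding desc_def using xV b ub by simp
  ultimately show ?thesis by blast
qed

lemma desc_children_disjoint: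
  assumes "u \<in> child w" "u' \<in> child w" "x \<in> desc u" "x \<in> desc u'"
  shows "u = u'"
proof -
  obtain b b' where "root_path x = root_path u @ b" "root_path x = root_path u' @ b'"
    using desc_root_path assms(3,4) by metis
  moreover have "length (root_path u) = length (root_path u')"
    using child_root_path assms(1,2) by simp
  ultimately have "root_path u = root_path u'" by (simp add: append_eq_append_conv)
  then show ?thesis using child_root_path assms(1,2) by simp
qed

lemma length_root_path_le: "x \<in> V \<Longrightarrow> length (root_path x) \<le> card V"
  using root_path_spec[of x] card_mono[OF finite_V root_path_in_V[of x]]
  by (simp add: is_path_def distinct_card)

lemma child_induct[consumes 1, case_names step]:
  assumes "w \<in> V" and step: "\<And>w. w \<in> V \<Longrightarrow> (\<And>u. u \<in> child w \<Longrightarrow> P u) \<Longrightarrow> P w"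
  shows "P w"
  using assms(1)
proof (induction "card V - length (root_path w)" arbitrary: w rule: less_induct)
  case less
  show ?case
  proof (rule step[OF less.prems])
    fix u assume u: "u \<in> child w"
    have "length (root_path u) = Suc (length (root_path w))" "length (root_path u) \<le> card V"
      using child_root_path[OF u] length_root_path_le[of u] child_in_V[OF u] by auto
    then have "card V - length (root_path u) < card V - length (root_path w)" by simp
    then show "P u" using less.hyps child_in_V[OF u] by blast
  qed
qed

definition subtrees :: "'a \<Rightarrow> 'a set set" where
  "subtrees w = {S. w \<in> S \<and> S \<subseteq> desc w \<and> (\<forall>x\<in>S. x \<noteq> w \<longrightarrow> parent x \<in> S)}"

text \<open>The path from \<open>w\<close> down to a descendant \<open>l\<close>.\<close>

definition branch :: "'a \<Rightarrow> 'a \<Rightarrow> 'a list" where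
  "branch w l = w # drop (length (root_path w)) (root_path l)"

definition leaves_in :: "'a set \<Rightarrow> 'a set" where
  "leaves_in S = {l \<in> S. child l \<inter> S = {}}"

lemma subtree_desc: "S \<in> subtrees w \<Longrightarrow> S \<subseteq> desc w"
  unfolding subtrees_def by blast

lemma subtree_root: "S \<in> subtrees w \<Longrightarrow> w \<in> S"
  unfolding subtrees_def by blast

lemma subtree_parent: "S \<in> subtrees w \<Longrightarrow> x \<in> S \<Longrightarrow> x \<noteq> w \<Longrightarrow> parent x \<in> S"
  unfolding subtrees_def by blast

lemma subtree_root_in_V: "S \<in> subtrees w \<Longrightarrow> w \<in> V"
  using subtree_desc subtree_root desc_in_V by blast

lemma finite_subtree: "S \<in> subtrees w \<Longrightarrow> finite S"
  using subtree_desc desc_subset_V finite_V finite_subset by metis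

lemma finite_subtrees: "finite (subtrees w)"
proof -
  have "subtrees w \<subseteq> Pow V" using subtree_desc desc_subset_V by blast
  then show ?thesis using finite_V finite_subset by blast
qed

lemma singleton_subtree: "w \<in> V \<Longrightarrow> {w} \<in> subtrees w"
  unfolding subtrees_def using desc_refl by auto

lemma desc_parent:
  assumes "x \<in> desc w" "x \<noteq> w"
  shows "parent x \<in> desc w" "x \<in> child (parent x)"
proof -
  have x: "x \<in> V" "x \<noteq> v" using assms desc_subset_V desc_neq_root by auto
  then show "x \<in> child (parent x)" unfolding child_def by simp
  have "w \<in> set (root_path (parent x))"
    using assms root_path_parent(1)[OF x] unfolding desc_def by auto
  then show "parent x \<in> desc w" using root_path_parent(2)[OF x] unfolding desc_def by simp
qed

lemma subtree_induct:
  assumes S: "S \<in> subtrees w" and x: "x \<in> S" and base: "P w"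
    and step: "\<And>x. x \<in> S \<Longrightarrow> x \<noteq> w \<Longrightarrow> P (parent x) \<Longrightarrow> P x"
  shows "P x"
  using x
proof (induction "length (root_path x)" arbitrary: x rule: less_induct)
  case less
  show ?case
  proof (cases "x = w")
    case False
    have "x \<in> desc w" using less.prems subtree_desc[OF S] by blast
    then have "x \<in> child (parent x)" using desc_parent False by blast
    then have "length (root_path (parent x)) < length (root_path x)"
      using child_root_path by simp
    then show ?thesis using less step subtree_parent[OF S] False by blast
  qed (use base in simp)
qed

lemma root_path_via_branch:
  assumes "l \<in> desc w"
  shows "root_path l = butlast (root_path w) @ branch w l"
proof -
  obtain b where b: "root_path l = root_path w @ b" using desc_root_path[OF assms] by blast
  have "w \<in> V" using desc_in_V[OF assms] .
  then have "root_path w = butlast (root_path w) @ [w]"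
    using root_path_spec root_path_nonempty by (metis append_butlast_last_id)
  moreover have "branch w l = w # b" unfolding branch_def b by simp
  ultimately show ?thesis using b by (metis append_Cons append_Nil append_assoc)
qed

lemma hd_branch: "hd (branch w l) = w"
  unfolding branch_def by simp

lemma branch_self: "branch w w = [w]"
  unfolding branch_def by simp

lemma is_path_branch:
  assumes "l \<in> desc w"
  shows "is_path E (branch w l)"
proof -
  have "l \<in> V" using assms desc_subset_V by blast
  then have "is_path E (butlast (root_path w) @ branch w l)"
    using root_path_via_branch[OF assms] root_path_spec by metis
  then show ?thesis by (rule is_path_suffix) (simp add: branch_def)
qed

lemma last_branch:
  assumes "l \<in> desc w"
  shows "last (branch w l) = l"
proof -
  have "l \<in> V" using assms desc_subset_V by blast
  then have "last (butlast (root_path w) @ branch w l) = l"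
    using root_path_via_branch[OF assms] root_path_spec by metis
  then show ?thesis by (simp add: branch_def)
qed

lemma branch_child: "l \<in> desc w \<Longrightarrow> c \<in> child l \<Longrightarrow> branch w c = branch w l @ [c]"
  using desc_root_path[of l w] child_root_path[of c l] unfolding branch_def by auto

lemma branch_in_subtree:
  assumes S: "S \<in> subtrees w" and l: "l \<in> S"
  shows "set (branch w l) \<subseteq> S"
  using S l
proof (rule subtree_induct)
  show "set (branch w w) \<subseteq> S" using subtree_root[OF S] by (simp add: branch_self)
next
  fix x assume x: "x \<in> S" "x \<noteq> w" and IH: "set (branch w (parent x)) \<subseteq> S"
  have "x \<in> desc w" using x subtree_desc[OF S] by blast
  then have "branch w x = branch w (parent x) @ [x]" using branch_child desc_parent x(2) by metis
  then show "set (branch w x) \<subseteq> S" using IH x by simp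
qed

lemma proper_ancestors_not_desc:
  assumes "w \<in> V"
  shows "set (butlast (root_path w)) \<inter> desc w = {}"
proof -
  have "root_path w = butlast (root_path w) @ [w]"
    using root_path_spec[OF assms] root_path_nonempty[OF assms] by (metis append_butlast_last_id)
  then have "w \<notin> set (butlast (root_path w))"
    using root_path_spec[OF assms] by (metis distinct_append is_path_def not_distinct_conv_prefix)
  then show ?thesis using ancestor_not_in_desc[OF assms] in_set_butlastD by fastforce
qed

lemma branch_subset_root_path: "l \<in> desc w \<Longrightarrow> set (branch w l) \<subseteq> set (root_path l)"
  using root_path_via_branch by (metis set_append sup_ge2)

lemma subtree_ancestor_closed:
  assumes S: "S \<in> subtrees w" and x: "x \<in> S" and u: "u \<in> set (root_path x)" "u \<in> desc w"
  shows "u \<in> S"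
proof -
  have "x \<in> desc w" using x subtree_desc[OF S] by blast
  moreover have "u \<notin> set (butlast (root_path w))"
    using proper_ancestors_not_desc[OF subtree_root_in_V[OF S]] u(2) by blast
  ultimately have "u \<in> set (branch w x)" using u(1) root_path_via_branch by fastforce
  then show ?thesis using branch_in_subtree[OF S x] by blast
qed

lemma branch_unique:
  assumes p: "is_path E p" "hd p = w" "set p \<subseteq> desc w"
  shows "p = branch w (last p)"
proof -
  have "p \<noteq> []" using p(1) by (simp add: is_path_def)
  then have l: "last p \<in> desc w" using p(3) by auto
  then have w: "w \<in> V" by (rule desc_in_V)
  define q where "q = butlast (root_path w) @ p"
  have "root_path w = butlast (root_path w) @ [w]"
    using root_path_spec[OF w] root_path_nonempty[OF w] by (metis append_butlast_last_id)
  then have q: "q = root_path w @ tl p"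
    unfolding q_def using p(2) \<open>p \<noteq> []\<close> by (cases p) auto
  have "walk E q"
    unfolding q using root_path_spec[OF w] p(1,2)
    by (intro walk_append) (auto simp: is_path_iff_walk_distinct)
  moreover have "distinct q"
    unfolding q_def using proper_ancestors_not_desc[OF w] p root_path_spec[OF w]
    by (auto simp: is_path_def distinct_butlast)
  moreover have "hd q = v"
    unfolding q using root_path_spec[OF w] root_path_nonempty[OF w] by simp
  moreover have "last q = last p"
    unfolding q_def using \<open>p \<noteq> []\<close> by simp
  ultimately have "root_path (last p) = q"
    by (intro root_path_eqI) (auto simp: is_path_iff_walk_distinct)
  then show ?thesis using root_path_via_branch[OF l] unfolding q_def by simp
qed

lemma path_from_subtree_iff:
  assumes S: "S \<in> subtrees w"
  shows "path_from S (induced E S) w p \<longleftrightarrow> (\<exists>l\<in>S. p = branch w l)"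
proof
  assume "\<exists>l\<in>S. p = branch w l"
  then obtain l where l: "l \<in> S" "p = branch w l" by blast
  have "is_path E (branch w l)" using is_path_branch l(1) subtree_desc[OF S] by blast
  then show "path_from S (induced E S) w p"
    unfolding path_from_def l(2) using is_path_induced branch_in_subtree[OF S l(1)]
    by (simp add: hd_branch)
next
  assume "path_from S (induced E S) w p"
  then have p: "is_path E p" "set p \<subseteq> S" "hd p = w"
    unfolding path_from_def using is_path_mono[OF induced_subset] by auto
  then have "p = branch w (last p)" using subtree_desc[OF S] by (intro branch_unique) auto
  moreover have "last p \<in> S" using p by (metis is_path_def last_in_set subsetD)
  ultimately show "\<exists>l\<in>S. p = branch w l" by blast
qed

lemma branch_to_leaf_maximal:
  assumes S: "S \<in> subtrees w" and l: "l \<in> leaves_in S"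
    and q: "path_from S (induced E S) w q" and sub: "set (branch w l) \<subseteq> set q"
  shows "set q = set (branch w l)"
proof (rule ccontr)
  assume ne: "set q \<noteq> set (branch w l)"
  obtain m where m: "m \<in> S" "q = branch w m" using q path_from_subtree_iff[OF S] by blast
  have lD: "l \<in> desc w" and mD: "m \<in> desc w"
    using l m(1) subtree_desc[OF S] unfolding leaves_in_def by auto
  have "l \<in> set (branch w l)"
    using last_in_set[of "branch w l"] last_branch[OF lD] by (simp add: branch_def)
  then have "l \<in> set q" using sub by blast
  then have "m \<in> desc l"
    using m mD branch_subset_root_path desc_subset_V unfolding desc_def by blast
  moreover have "m \<noteq> l" using ne m by auto
  ultimately obtain c where c: "c \<in> child l" "m \<in> desc c" using desc_in_child_desc by blast
  have "c \<in> desc w" using c(1) lD child_in_desc desc_trans by blast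
  then have "c \<in> S" using subtree_ancestor_closed[OF S m(1)] c(2) unfolding desc_def by blast
  then show False using c(1) l unfolding leaves_in_def by blast
qed

lemma max_paths_subtree:
  assumes S: "S \<in> subtrees w"
  shows "max_paths S (induced E S) w = branch w ` leaves_in S"
proof (rule set_eqI, rule iffI)
  fix p assume max: "p \<in> max_paths S (induced E S) w"
  then obtain l where l: "l \<in> S" "p = branch w l"
    using path_from_subtree_iff[OF S] unfolding max_paths_def by blast
  have "c \<notin> S" if c: "c \<in> child l" for c
  proof
    assume "c \<in> S"
    have "l \<in> desc w" using l subtree_desc[OF S] by blast
    then have q: "branch w c = p @ [c]" using branch_child c l(2) by blast
    moreover have "distinct (branch w c)"
      using is_path_branch \<open>c \<in> S\<close> subtree_desc[OF S] by (auto simp: is_path_def)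
    ultimately have "set p \<subseteq> set (p @ [c])" "set p \<noteq> set (p @ [c])" by auto
    moreover have "path_from S (induced E S) w (p @ [c])"
      using path_from_subtree_iff[OF S] \<open>c \<in> S\<close> q by metis
    ultimately show False
      using max path_edges_snoc[of p c] unfolding max_paths_def by blast
  qed
  then show "p \<in> branch w ` leaves_in S" using l unfolding leaves_in_def by blast
next
  fix p assume "p \<in> branch w ` leaves_in S"
  then obtain l where l: "l \<in> leaves_in S" "p = branch w l" by blast
  then have "path_from S (induced E S) w p"
    using path_from_subtree_iff[OF S] unfolding leaves_in_def by blast
  then show "p \<in> max_paths S (induced E S) w"
    using branch_to_leaf_maximal[OF S l(1)] l(2) unfolding max_paths_def by blast
qed

lemma subtree_neighbours:
  assumes S: "S \<in> subtrees w" and x: "x \<in> S"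
  shows "{y \<in> S. adj E x y} = (child x \<inter> S) \<union> (if x = w then {} else {parent x})"
proof -
  have xD: "x \<in> desc w" and xV: "x \<in> V" using x subtree_desc[OF S] desc_subset_V by auto
  have "y \<in> child x \<or> (x \<noteq> w \<and> y = parent x)" if y: "y \<in> S" "adj E x y" for y
    using adj_parent_or_child[OF xV y(2)] parent_not_in_desc[OF xV] y(1) subtree_desc[OF S] by auto
  moreover have "adj E x y" if "y \<in> child x" for y
    using that root_path_parent(3) adj_sym unfolding child_def by blast
  moreover have "adj E x (parent x)" "parent x \<in> S" if "x \<noteq> w"
    using that root_path_parent(3)[OF xV desc_neq_root[OF xD]] adj_sym subtree_parent[OF S x]
    by auto
  ultimately show ?thesis by auto
qed

lemma deg_subtree:
  assumes S: "S \<in> subtrees w" and x: "x \<in> S"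
  shows "deg (induced E S) x = card (child x \<inter> S) + (if x = w then 0 else 1)"
proof -
  have xV: "x \<in> V" using x subtree_desc[OF S] desc_subset_V by auto
  have "parent x \<notin> child x" if "x \<noteq> w"
    using child_in_desc parent_not_in_desc[OF xV] desc_neq_root x subtree_desc[OF S] that by blast
  then show ?thesis
    using deg_induced_eq_card_adj[OF graph x] subtree_neighbours[OF S x] finite_child by auto
qed

lemma leaves_in_nonempty:
  assumes S: "S \<in> subtrees w"
  shows "finite (leaves_in S)" "leaves_in S \<noteq> {}"
proof -
  show "finite (leaves_in S)" using finite_subtree[OF S] unfolding leaves_in_def by simp
  have fin: "finite S" "S \<noteq> {}" using finite_subtree[OF S] subtree_root[OF S] by auto
  then obtain l where l: "l \<in> S" "Max ((\<lambda>x. length (root_path x)) ` S) = length (root_path l)"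
    by (rule obtains_MAX)
  have "c \<notin> S" if "c \<in> child l" for c
  proof
    assume "c \<in> S"
    then have "length (root_path c) \<le> length (root_path l)"
      using l fin by (metis Max_ge finite_imageI image_eqI)
    then show False using child_root_path[OF that] by simp
  qed
  then have "child l \<inter> S = {}" by blast
  then show "leaves_in S \<noteq> {}" using l(1) unfolding leaves_in_def by blast
qed

lemma subtree_in_child_desc:
  assumes S: "S \<in> subtrees w" and x: "x \<in> S" "x \<noteq> w"
  shows "\<exists>u\<in>child w \<inter> S. x \<in> desc u"
proof -
  obtain u where u: "u \<in> child w" "x \<in> desc u"
    using desc_in_child_desc x subtree_desc[OF S] by blast
  then have "u \<in> S"
    using subtree_ancestor_closed[OF S x(1)] child_in_desc unfolding desc_def by blast
  then show ?thesis using u by blast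
qed

lemma subtree_without_children: "S \<in> subtrees w \<Longrightarrow> child w \<inter> S = {} \<Longrightarrow> S = {w}"
  using subtree_in_child_desc subtree_root by blast

lemma branch_via_child: "u \<in> child w \<Longrightarrow> l \<in> desc u \<Longrightarrow> branch w l = w # branch u l"
  using desc_root_path[of l u] child_root_path[of u w] unfolding branch_def by auto

lemma subtree_restrict_child:
  assumes S: "S \<in> subtrees w" and u: "u \<in> child w \<inter> S"
  shows "S \<inter> desc u \<in> subtrees u"
proof -
  have "parent x \<in> S \<inter> desc u" if "x \<in> S \<inter> desc u" "x \<noteq> u" for x
    using that desc_child_subset u subtree_parent[OF S] desc_parent by blast
  moreover have "u \<in> S \<inter> desc u" using u desc_refl child_in_V by blast
  ultimately show ?thesis unfolding subtrees_def by blast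
qed

lemma leaves_in_decomp:
  assumes S: "S \<in> subtrees w" and C: "child w \<inter> S \<noteq> {}"
  shows "leaves_in S = (\<Union>u\<in>child w \<inter> S. leaves_in (S \<inter> desc u))"
proof (rule set_eqI, rule iffI)
  fix l assume "l \<in> leaves_in S"
  then have l: "l \<in> S" "child l \<inter> S = {}" unfolding leaves_in_def by auto
  then have "l \<noteq> w" using C by blast
  then obtain u where "u \<in> child w \<inter> S" "l \<in> desc u" using subtree_in_child_desc[OF S l(1)] by blast
  then show "l \<in> (\<Union>u\<in>child w \<inter> S. leaves_in (S \<inter> desc u))"
    using l unfolding leaves_in_def by blast
next
  fix l assume "l \<in> (\<Union>u\<in>child w \<inter> S. leaves_in (S \<inter> desc u))"
  then obtain u where "l \<in> S" "l \<in> desc u" "child l \<inter> (S \<inter> desc u) = {}"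
    unfolding leaves_in_def by auto
  moreover from this have "child l \<subseteq> desc u" using child_in_desc desc_trans by blast
  ultimately show "l \<in> leaves_in S" unfolding leaves_in_def by blast
qed

definition min_excess :: "'a \<Rightarrow> 'a set \<Rightarrow> int" where
  "min_excess w S =
     Min ((\<lambda>P. \<Sum>x\<in>set P. int (deg (induced E S) x) - 2) ` max_paths S (induced E S) w)"

text \<open>deg_S(x) - 2 for x \<in> S, read off the rooted structure (see deg_subtree).\<close>

definition excess :: "'a set \<Rightarrow> 'a \<Rightarrow> 'a \<Rightarrow> int" where
  "excess S w x = int (card (child x \<inter> S)) + (if x = w then 0 else 1) - 2"

definition branch_excess :: "'a set \<Rightarrow> 'a \<Rightarrow> 'a \<Rightarrow> int" where
  "branch_excess S w l = (\<Sum>x\<in>set (branch w l). excess S w x)"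

lemma min_excess_eq_Min_leaves:
  assumes S: "S \<in> subtrees w"
  shows "min_excess w S = Min (branch_excess S w ` leaves_in S)"
proof -
  have "(\<Sum>x\<in>set (branch w l). int (deg (induced E S) x) - 2) = branch_excess S w l"
    if "l \<in> leaves_in S" for l
  proof -
    have "set (branch w l) \<subseteq> S" using that branch_in_subtree[OF S] unfolding leaves_in_def by blast
    then show ?thesis unfolding branch_excess_def excess_def
      using deg_subtree[OF S] by (intro sum.cong) auto
  qed
  then have "(\<lambda>l. \<Sum>x\<in>set (branch w l). int (deg (induced E S) x) - 2) ` leaves_in S
      = branch_excess S w ` leaves_in S" by (rule image_cong[OF refl])
  then show ?thesis unfolding min_excess_def max_paths_subtree[OF S] image_image by simp
qed

lemma min_excess_singleton:
  assumes "w \<in> V"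
  shows "min_excess w {w} = -2"
proof -
  have "leaves_in {w} = {w}" unfolding leaves_in_def using child_neq by blast
  moreover have "branch_excess {w} w w = -2"
    unfolding branch_excess_def branch_self excess_def using child_neq by (simp add: disjoint_iff)
  ultimately show ?thesis using min_excess_eq_Min_leaves[OF singleton_subtree[OF assms]] by simp
qed

text \<open>Passing from \<open>S\<close> to its part below the child \<open>u\<close> changes the excess along a branch
  only at \<open>w\<close>, which is dropped, and at \<open>u\<close>, which loses its parent edge.\<close>

lemma branch_excess_decomp:
  assumes S: "S \<in> subtrees w" and u: "u \<in> child w \<inter> S" and l: "l \<in> leaves_in (S \<inter> desc u)"
  shows "branch_excess S w l = int (card (child w \<inter> S)) - 1 + branch_excess (S \<inter> desc u) u l"
proof -
  let ?U = "S \<inter> desc u"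
  have lU: "l \<in> ?U" using l unfolding leaves_in_def by blast
  have sub: "set (branch u l) \<subseteq> ?U" using branch_in_subtree[OF subtree_restrict_child[OF S u] lU] .
  then have w: "w \<notin> set (branch u l)" using desc_child_subset u by blast
  have "excess S w x = excess ?U u x + (if x = u then 1 else 0)" if "x \<in> set (branch u l)" for x
  proof -
    have "child x \<subseteq> desc u" using that sub child_in_desc desc_trans by blast
    then have "child x \<inter> S = child x \<inter> ?U" by blast
    then show ?thesis using that w unfolding excess_def by auto
  qed
  then have "(\<Sum>x\<in>set (branch u l). excess S w x)
      = (\<Sum>x\<in>set (branch u l). excess ?U u x + (if x = u then 1 else 0))"
    by (rule sum.cong[OF refl])
  also have "\<dots> = branch_excess ?U u l + 1"
    unfolding branch_excess_def sum.distrib by (simp add: branch_def)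
  moreover have "branch w l = w # branch u l" using branch_via_child u lU by blast
  then have "branch_excess S w l = excess S w w + (\<Sum>x\<in>set (branch u l). excess S w x)"
    unfolding branch_excess_def using w by simp
  moreover have "excess S w w = int (card (child w \<inter> S)) - 2" by (simp add: excess_def)
  ultimately show ?thesis by simp
qed

lemma min_excess_decomp:
  assumes S: "S \<in> subtrees w" and C: "child w \<inter> S \<noteq> {}"
  shows "min_excess w S
    = int (card (child w \<inter> S)) - 1 + Min ((\<lambda>u. min_excess u (S \<inter> desc u)) ` (child w \<inter> S))"
proof -
  let ?C = "child w \<inter> S" and ?k = "int (card (child w \<inter> S)) - 1"
  have finC: "finite ?C" using finite_child by simp
  have L: "finite (leaves_in (S \<inter> desc u)) \<and> leaves_in (S \<inter> desc u) \<noteq> {}" if "u \<in> ?C" for u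
    using leaves_in_nonempty subtree_restrict_child[OF S that] by blast
  have sub: "Min (branch_excess S w ` leaves_in (S \<inter> desc u)) = min_excess u (S \<inter> desc u) + ?k"
    if u: "u \<in> ?C" for u
  proof -
    have "branch_excess S w ` leaves_in (S \<inter> desc u)
        = (\<lambda>l. branch_excess (S \<inter> desc u) u l + ?k) ` leaves_in (S \<inter> desc u)"
      using branch_excess_decomp[OF S u] by (intro image_cong) auto
    moreover have "Min ((\<lambda>l. branch_excess (S \<inter> desc u) u l + ?k) ` leaves_in (S \<inter> desc u))
        = Min (branch_excess (S \<inter> desc u) u ` leaves_in (S \<inter> desc u)) + ?k"
      using L[OF u] by (intro Min_add_commute) auto
    ultimately show ?thesis
      using min_excess_eq_Min_leaves[OF subtree_restrict_child[OF S u]] by simp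
  qed
  have "min_excess w S = Min (branch_excess S w ` (\<Union>u\<in>?C. leaves_in (S \<inter> desc u)))"
    unfolding min_excess_eq_Min_leaves[OF S] leaves_in_decomp[OF S C] ..
  also have "\<dots> = Min ((\<lambda>u. Min (branch_excess S w ` leaves_in (S \<inter> desc u))) ` ?C)"
    using Min_image_UN[OF finC C L] .
  also have "\<dots> = Min ((\<lambda>u. min_excess u (S \<inter> desc u) + ?k) ` ?C)"
    using sub by (intro arg_cong[where f = Min] image_cong) auto
  also have "\<dots> = ?k + Min ((\<lambda>u. min_excess u (S \<inter> desc u)) ` ?C)"
    using Min_add_commute[OF finC C, of "\<lambda>u. min_excess u (S \<inter> desc u)" ?k]
    by (simp add: add.commute)
  finally show ?thesis .
qed

definition max_excess :: "'a \<Rightarrow> int" where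
  "max_excess w = Max (min_excess w ` subtrees w)"

definition child_subsets :: "'a \<Rightarrow> 'a set set" where
  "child_subsets w = {C. C \<subseteq> child w \<and> C \<noteq> {}}"

definition subset_value :: "'a set \<Rightarrow> int" where
  "subset_value C = int (card C) - 1 + Min (max_excess ` C)"

lemma finite_child_subsets: "finite (child_subsets w)"
proof -
  have "child_subsets w \<subseteq> Pow (child w)" unfolding child_subsets_def by blast
  then show ?thesis using finite_child finite_subset by blast
qed

lemma min_excess_le_max_excess: "S \<in> subtrees w \<Longrightarrow> min_excess w S \<le> max_excess w"
  unfolding max_excess_def using finite_subtrees by simp

lemma max_excess_attained: "w \<in> V \<Longrightarrow> \<exists>S\<in>subtrees w. min_excess w S = max_excess w"
  unfolding max_excess_def using finite_subtrees singleton_subtree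
  by (metis Max_in empty_iff finite_imageI image_iff image_is_empty)

lemma max_excess_ge: "w \<in> V \<Longrightarrow> -2 \<le> max_excess w"
  using min_excess_le_max_excess[OF singleton_subtree] min_excess_singleton by metis

lemma subtrees_leaf: "child w = {} \<Longrightarrow> w \<in> V \<Longrightarrow> subtrees w = {{w}}"
  using subtree_without_children singleton_subtree by blast

lemma min_excess_le_subset_value:
  assumes S: "S \<in> subtrees w" and C: "child w \<inter> S \<noteq> {}"
  shows "min_excess w S \<le> subset_value (child w \<inter> S)"
proof -
  have "Min ((\<lambda>u. min_excess u (S \<inter> desc u)) ` (child w \<inter> S)) \<le> Min (max_excess ` (child w \<inter> S))"
    using finite_child C subtree_restrict_child[OF S]
    by (intro Min_image_mono min_excess_le_max_excess) auto
  then show ?thesis unfolding subset_value_def min_excess_decomp[OF S C] by simp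
qed

lemma glued_subtree:
  assumes w: "w \<in> V" and C: "C \<subseteq> child w" and T: "\<And>u. u \<in> C \<Longrightarrow> T u \<in> subtrees u"
  defines "S \<equiv> insert w (\<Union>u\<in>C. T u)"
  shows "S \<in> subtrees w" "child w \<inter> S = C" "\<And>u. u \<in> C \<Longrightarrow> S \<inter> desc u = T u"
proof -
  have TD: "T u \<subseteq> desc u" if "u \<in> C" for u using subtree_desc[OF T[OF that]] .
  have Tw: "T u \<subseteq> desc w - {w}" if "u \<in> C" for u
    using TD[OF that] desc_child_subset[of u w] C that by blast
  have in_T: "\<exists>u\<in>C. x \<in> T u" if "x \<in> S" "x \<noteq> w" for x
    using that unfolding S_def by blast
  have "parent x \<in> S" if x: "x \<in> S" "x \<noteq> w" for x
  proof -
    obtain u where u: "u \<in> C" "x \<in> T u" using in_T[OF x] by blast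
    show ?thesis
    proof (cases "x = u")
      case True
      then have "parent x = w" using C u(1) unfolding child_def by auto
      then show ?thesis unfolding S_def by simp
    next
      case False
      then have "parent x \<in> T u" using subtree_parent[OF T[OF u(1)] u(2)] by blast
      then show ?thesis unfolding S_def using u(1) by blast
    qed
  qed
  moreover have "S \<subseteq> desc w" unfolding S_def using desc_refl[OF w] Tw by blast
  moreover have "w \<in> S" unfolding S_def by simp
  ultimately show "S \<in> subtrees w" unfolding subtrees_def by blast
  have "c \<in> C" if c: "c \<in> child w" "c \<in> S" for c
  proof -
    obtain u where u: "u \<in> C" "c \<in> T u" using in_T c child_neq by blast
    have "c \<in> desc c" using desc_refl child_in_V c(1) by blast
    then have "u = c" using desc_children_disjoint[of u w c c] C u TD c(1) by blast
    then show ?thesis using u(1) by simp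
  qed
  moreover have "u \<in> S" if "u \<in> C" for u
    using subtree_root[OF T[OF that]] that unfolding S_def by blast
  ultimately show "child w \<inter> S = C" using C by blast
  fix u assume u: "u \<in> C"
  have "x \<in> T u" if x: "x \<in> S" "x \<in> desc u" for x
  proof -
    have "x \<noteq> w" using x(2) desc_child_subset[of u w] C u by blast
    then obtain u' where u': "u' \<in> C" "x \<in> T u'" using in_T x(1) by blast
    then have "u' = u" using desc_children_disjoint[of u' w u x] C u TD x(2) by blast
    then show ?thesis using u' by simp
  qed
  moreover have "T u \<subseteq> S" unfolding S_def using u by blast
  ultimately show "S \<inter> desc u = T u" using TD[OF u] by blast
qed

lemma subset_value_attained:
  assumes w: "w \<in> V" and C: "C \<in> child_subsets w"
  shows "\<exists>S\<in>subtrees w. min_excess w S = subset_value C"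
proof -
  have C': "C \<subseteq> child w" "C \<noteq> {}" using C unfolding child_subsets_def by auto
  have "\<forall>u\<in>C. \<exists>S. S \<in> subtrees u \<and> min_excess u S = max_excess u"
    using max_excess_attained child_in_V C'(1) by blast
  then obtain T where T: "\<And>u. u \<in> C \<Longrightarrow> T u \<in> subtrees u \<and> min_excess u (T u) = max_excess u"
    by (metis bchoice)
  define S where "S = insert w (\<Union>u\<in>C. T u)"
  have "T u \<in> subtrees u" if "u \<in> C" for u using T that by blast
  note glued = glued_subtree[OF w C'(1) this, folded S_def]
  have "min_excess w S = int (card C) - 1 + Min ((\<lambda>u. min_excess u (S \<inter> desc u)) ` C)"
    using min_excess_decomp[OF glued(1)] glued(2) C'(2) T by simp
  also have "(\<lambda>u. min_excess u (S \<inter> desc u)) ` C = max_excess ` C"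
    using glued(3) T by (intro image_cong) auto
  finally show ?thesis using glued(1) unfolding subset_value_def by blast
qed

lemma max_excess_rec:
  assumes w: "w \<in> V" and ch: "child w \<noteq> {}"
  shows "max_excess w = Max (subset_value ` child_subsets w)"
  unfolding max_excess_def
proof (rule Max_eq_if)
  show "\<forall>a\<in>min_excess w ` subtrees w. \<exists>b\<in>subset_value ` child_subsets w. a \<le> b"
  proof
    fix a assume "a \<in> min_excess w ` subtrees w"
    then obtain S where S: "S \<in> subtrees w" "a = min_excess w S" by blast
    show "\<exists>b\<in>subset_value ` child_subsets w. a \<le> b"
    proof (cases "child w \<inter> S = {}")
      case True
      have "Min (max_excess ` child w) \<ge> -2"
        using finite_child ch max_excess_ge child_in_V by (simp add: Min_ge_iff)
      moreover have "card (child w) \<ge> 1"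
        using finite_child ch by (simp add: Suc_le_eq card_gt_0_iff)
      ultimately have "-2 \<le> subset_value (child w)" unfolding subset_value_def by simp
      moreover have "a = -2"
        using S subtree_without_children[OF S(1) True] min_excess_singleton w by simp
      ultimately show ?thesis using ch unfolding child_subsets_def by blast
    next
      case False
      then show ?thesis
        using S min_excess_le_subset_value unfolding child_subsets_def by blast
    qed
  qed
  show "\<forall>b\<in>subset_value ` child_subsets w. \<exists>a\<in>min_excess w ` subtrees w. b \<le> a"
  proof
    fix b assume "b \<in> subset_value ` child_subsets w"
    then obtain S where "S \<in> subtrees w" "min_excess w S = b"
      using subset_value_attained[OF w] by blast
    then show "\<exists>a\<in>min_excess w ` subtrees w. b \<le> a" by blast
  qed
qed (simp_all add: finite_subtrees finite_child_subsets)

definition f_value :: "'a \<Rightarrow> nat" where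
  "f_value w = (if w \<in> V then nat (2 + max_excess w) else 0)"

lemma int_f_value: "w \<in> V \<Longrightarrow> int (f_value w) = 2 + max_excess w"
  unfolding f_value_def using max_excess_ge[of w] by simp

lemma f_value_rec:
  assumes w: "w \<in> V"
  shows "f_value w = f_step f_value (child w)"
proof (cases "child w = {}")
  case True
  then have "max_excess w = -2"
    unfolding max_excess_def subtrees_leaf[OF True w] using min_excess_singleton[OF w] by simp
  then show ?thesis unfolding f_value_def using w True by (simp add: f_step_def)
next
  case False
  let ?N = "\<lambda>C. card C - 1 + Min (f_value ` C)"
  have ne: "child_subsets w \<noteq> {}" using False unfolding child_subsets_def by blast
  have N: "int (?N C) = subset_value C + 2" if C: "C \<in> child_subsets w" for C
  proof -
    have C': "finite C" "C \<noteq> {}" "C \<subseteq> V"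
      using C finite_child finite_subset child_in_V unfolding child_subsets_def by blast+
    have "int (Min (f_value ` C)) = Min (int ` f_value ` C)"
      using C' by (intro mono_Min_commute) (auto intro: monoI)
    also have "int ` f_value ` C = (\<lambda>u. max_excess u + 2) ` C"
      using int_f_value C'(3) by (auto simp: image_image add.commute intro!: image_cong)
    also have "Min \<dots> = Min (max_excess ` C) + 2" using C' by (intro Min_add_commute) auto
    finally show ?thesis
      using C' unfolding subset_value_def by (simp add: of_nat_diff Suc_le_eq card_gt_0_iff)
  qed
  have "f_step f_value (child w) = Max (?N ` child_subsets w)"
    using f_step_eq_Max_subsets[OF finite_child False, of f_value]
    unfolding child_subsets_def by (simp add: setcompr_eq_image)
  then have "int (f_step f_value (child w)) = Max (int ` ?N ` child_subsets w)"
    using finite_child_subsets ne by (auto intro!: mono_Max_commute monoI)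
  also have "int ` ?N ` child_subsets w = (\<lambda>C. subset_value C + 2) ` child_subsets w"
    using N by (auto simp: image_image intro!: image_cong)
  also have "Max \<dots> = max_excess w + 2"
    using Max_add_commute[OF finite_child_subsets ne, of subset_value 2] max_excess_rec[OF w False]
    by simp
  finally show ?thesis using int_f_value[OF w] by simp
qed

lemma f_tree_eq_f_value: "f_tree V E v = f_value"
  unfolding f_tree_def
proof (rule the_equality)
  show "(\<forall>w\<in>V. f_value w = f_step f_value (children V E v w)) \<and> (\<forall>w. w \<notin> V \<longrightarrow> f_value w = 0)"
    using f_value_rec children_eq_child unfolding f_value_def by auto
next
  fix g assume g: "(\<forall>w\<in>V. g w = f_step g (children V E v w)) \<and> (\<forall>w. w \<notin> V \<longrightarrow> g w = 0)"
  have "g w = f_value w" if "w \<in> V" for w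
    using that
  proof (induction rule: child_induct)
    case (step w)
    then have "g w = f_step g (child w)" using g children_eq_child by simp
    also have "\<dots> = f_step f_value (child w)" using step by (intro f_step_cong) blast
    finally show ?case using f_value_rec[OF step(1)] by simp
  qed
  then show "g = f_value" using g unfolding f_value_def by (intro ext) auto
qed

lemma subtree_subgraph:
  assumes S: "S \<in> subtrees w"
  shows "subgraph S (induced E S) V E"
proof -
  have "\<exists>a b. a \<noteq> b \<and> e = {a, b} \<and> a \<in> S \<and> b \<in> S" if "e \<in> induced E S" for e
    using that graph_edgeE[OF graph] unfolding induced_def by (metis insert_subset mem_Collect_eq)
  then show ?thesis
    unfolding subgraph_def graph_def
    using finite_subtree[OF S] subtree_desc[OF S] desc_subset_V induced_subset by blast
qed

lemma subtree_connected:
  assumes S: "S \<in> subtrees w"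
  shows "connected_graph S (induced E S)"
  unfolding connected_graph_def
proof (intro conjI ballI)
  show "S \<noteq> {}" using subtree_root[OF S] by blast
  fix x y assume x: "x \<in> S" and y: "y \<in> S"
  have D: "x \<in> desc w" "y \<in> desc w" using x y subtree_desc[OF S] by auto
  have paths: "is_path (induced E S) (branch w x)" "is_path (induced E S) (branch w y)"
    using is_path_induced is_path_branch branch_in_subtree[OF S] D x y by blast+
  define p where "p = rev (branch w x) @ tl (branch w y)"
  have ne: "branch w x \<noteq> []" "branch w y \<noteq> []" by (simp_all add: branch_def)
  have "walk (induced E S) p"
    unfolding p_def using paths ne
    by (intro walk_append) (auto simp: is_path_iff_walk_distinct walk_rev last_rev hd_branch)
  moreover have "hd p = x" "last p = y"
    unfolding p_def using ne last_branch D
    by (simp_all add: hd_rev last_rev hd_branch last_append_tl)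
  moreover have "set p \<subseteq> S"
    unfolding p_def using branch_in_subtree[OF S] x y ne(2) by (auto dest: list.set_sel(2))
  ultimately show "\<exists>p. is_path (induced E S) p \<and> set p \<subseteq> S \<and> hd p = x \<and> last p = y"
    using walk_imp_path by (metis order_trans)
qed

lemma connected_subgraph_induced:
  assumes sub: "subgraph S ES V E" and conn: "connected_graph S ES"
  shows "ES = induced E S"
proof
  show "ES \<subseteq> induced E S"
    using sub graph_edge_subset unfolding subgraph_def induced_def by blast
  show "induced E S \<subseteq> ES"
  proof
    fix e assume "e \<in> induced E S"
    then have e: "e \<in> E" "e \<subseteq> S" unfolding induced_def by auto
    obtain a b where ab: "a \<noteq> b" "e = {a, b}" using graph_edgeE[OF graph e(1)] by metis
    obtain p where p: "is_path ES p" "hd p = a" "last p = b"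
      using conn ab e(2) unfolding connected_graph_def by blast
    have "is_path E [a, b]" using ab e(1) by (simp add: is_path_def adj_def)
    then have "p = [a, b]"
      using tree_path_unique is_path_mono[OF _ p(1)] sub p(2,3) unfolding subgraph_def by auto
    then show "e \<in> ES" using p(1) ab by (simp add: is_path_def adj_def)
  qed
qed

lemma connected_subgraph_subtree:
  assumes sub: "subgraph S ES V E" and conn: "connected_graph S ES" and v: "v \<in> S"
  shows "S \<in> subtrees v"
proof -
  have "parent x \<in> S" if x: "x \<in> S" "x \<noteq> v" for x
  proof -
    obtain p where p: "is_path ES p" "set p \<subseteq> S" "hd p = v" "last p = x"
      using conn v x(1) unfolding connected_graph_def by blast
    then have "root_path x = p"
      using sub is_path_mono root_path_eqI unfolding subgraph_def by blast
    then show ?thesis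
      using p(2) parent_in_root_path x sub unfolding subgraph_def by blast
  qed
  then show ?thesis using sub v desc_root unfolding subgraph_def subtrees_def by blast
qed

lemma connected_subgraphs_eq_subtrees:
  "{(S, ES). subgraph S ES V E \<and> connected_graph S ES \<and> v \<in> S}
    = (\<lambda>S. (S, induced E S)) ` subtrees v"
  using connected_subgraph_induced connected_subgraph_subtree
    subtree_subgraph subtree_connected subtree_root
  by fastforce

end

theorem proposition4p2:
  fixes V :: "'a set" and E :: "'a set set" and v :: 'a
  assumes "is_tree V E" and "card V \<ge> 3" and "v \<in> V"
  shows "int (f_tree V E v v) = 2 + Max ((\<lambda>(VS, ES). Min ((\<lambda>P. \<Sum>w\<in>set P. int (deg ES w) - 2) ` max_paths VS ES v))
            ` {(VS, ES). subgraph VS ES V E \<and> connected_graph VS ES \<and> v \<in> VS})"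
proof -
  interpret rooted_tree V E v using assms(1,3) by unfold_locales
  have "(\<lambda>(VS, ES). Min ((\<lambda>P. \<Sum>w\<in>set P. int (deg ES w) - 2) ` max_paths VS ES v))
      ` {(VS, ES). subgraph VS ES V E \<and> connected_graph VS ES \<and> v \<in> VS}
      = min_excess v ` subtrees v"
    unfolding connected_subgraphs_eq_subtrees image_image min_excess_def by simp
  then show ?thesis
    using f_tree_eq_f_value int_f_value[OF assms(3)] unfolding max_excess_def by simp
qed

end
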